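(* Let $S_X,S_Y$ be finite nonempty action sets, $\varphi:S_X\times S_Y\to\mathbb{R}$, $\lambda\in[0,1)$, and let $\tau_X^+,\tau_X^-\in\Delta(S_X)$ satisfy $$\min_{s_Y}\varphi(\tau_X^+,s_Y)\ge(1-\lambda)\max_{s_Y}\varphi(\tau_X^+,s_Y)+\lambda\max_{s_Y}\varphi(\tau_X^-,s_Y),$$ $$\max_{s_Y}\varphi(\tau_X^-,s_Y)\le\lambda\min_{s_Y}\varphi(\tau_X^+,s_Y)+(1-\lambda)\min_{s_Y}\varphi(\tau_X^-,s_Y),$$ (maxima and minima over $s_Y\in S_Y$). Then for every $K\in\big[\max_{s_Y}\varphi(\tau_X^-,s_Y),\ \min_{s_Y}\varphi(\tau_X^+,s_Y)\big]$ there exist $p_0\in[0,1]$ and $p^*:[0,1]\times S_Y\to[0,1]$ such that the reactive learning strategy with initial action $p_0\tau_X^++(1-p_0)\tau_X^-$ and reaction $$\sigma_X^*[p\tau_X^++(1-p)\tau_X^-,s_Y]=p^*[p,s_Y]\tau_X^++(1-p^*[p,s_Y])\tau_X^-$$ enforces $\varphi\equiv K$, i.e., is $(\varphi-K,\lambda)$-autocratic.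
   Context: Two players $X,Y$ play a repeated game with finite action sets $S_X,S_Y$; $\Delta(S)$ denotes the probability distributions on $S$; $\varphi(\tau_X,s_Y)=\mathbb{E}_{s_X\sim\tau_X}[\varphi(s_X,s_Y)]$. Histories: $\mathcal{H}=\bigcup_{T\ge0}(S_X\times S_Y)^T$; behavioral strategies are maps $\sigma:\mathcal{H}\to\Delta(S)$; players independently draw actions each round from their strategies evaluated at the history of realized action pairs, with $\mathbb{E}_{\sigma_X,\sigma_Y}$ the expectation over the resulting play. For a function $f:S_X\times S_Y\to\mathbb{R}$, $\sigma_X$ is $(f,\lambda)$-autocratic if for every behavioral strategy $\sigma_Y$ of $Y$, $\mathbb{E}_{\sigma_X,\sigma_Y}[(1-\lambda)\sum_{t\ge0}\lambda^tf(s_X^t,s_Y^t)]=0$. A reactive learning strategy with initial action $\sigma_X^0\in\Delta(S_X)$ and reaction $\sigma_X^*$ plays $\tau_X^0=\sigma_X^0$ in round $0$ and $\tau_X^{t+1}=\sigma_X^*[\tau_X^t,s_Y^t]$ in round $t+1$, where $s_Y^t$ is $Y$'s realized action in round $t$. *)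

theory Defs
  imports "HOL-Probability.Probability"
begin

type_synonym ('x,'y) history = "('x \<times> 'y) list"
type_synonym ('x,'y,'a) strategy = "('x,'y) history \<Rightarrow> 'a pmf"

fun hist_dist :: "('x,'y,'x) strategy \<Rightarrow> ('x,'y,'y) strategy \<Rightarrow> nat \<Rightarrow> ('x,'y) history pmf" where
  "hist_dist \<sigma>X \<sigma>Y 0 = return_pmf []"
| "hist_dist \<sigma>X \<sigma>Y (Suc T) =
     bind_pmf (hist_dist \<sigma>X \<sigma>Y T) (\<lambda>h.
       bind_pmf (\<sigma>X h) (\<lambda>x. bind_pmf (\<sigma>Y h) (\<lambda>y. return_pmf (h @ [(x, y)]))))"

definition round_exp :: "('x,'y,'x) strategy \<Rightarrow> ('x,'y,'y) strategy \<Rightarrow> ('x \<Rightarrow> 'y \<Rightarrow> real) \<Rightarrow> nat \<Rightarrow> real" where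
  "round_exp \<sigma>X \<sigma>Y f t =
     measure_pmf.expectation (hist_dist \<sigma>X \<sigma>Y (Suc t)) (\<lambda>h. f (fst (last h)) (snd (last h)))"

text \<open>Expected normalized discounted payoff E[(1-\<lambda>) \<Sum>_t \<lambda>^t f(s_X^t,s_Y^t)]
  (f bounded, so expectation and sum commute).\<close>
definition disc_payoff :: "('x,'y,'x) strategy \<Rightarrow> ('x,'y,'y) strategy \<Rightarrow> ('x \<Rightarrow> 'y \<Rightarrow> real) \<Rightarrow> real \<Rightarrow> real" where
  "disc_payoff \<sigma>X \<sigma>Y f lam = (1 - lam) * (\<Sum>t. lam ^ t * round_exp \<sigma>X \<sigma>Y f t)"

definition autocratic :: "('x,'y,'x) strategy \<Rightarrow> ('x \<Rightarrow> 'y \<Rightarrow> real) \<Rightarrow> real \<Rightarrow> bool" where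
  "autocratic \<sigma>X f lam \<longleftrightarrow> (\<forall>\<sigma>Y :: ('x,'y,'y) strategy. disc_payoff \<sigma>X \<sigma>Y f lam = 0)"

text \<open>Reactive learning strategy: \<tau>^0 = \<sigma>0, \<tau>^{t+1} = \<sigma>* [\<tau>^t, s_Y^t].\<close>
definition reactive :: "'x pmf \<Rightarrow> ('x pmf \<Rightarrow> 'y \<Rightarrow> 'x pmf) \<Rightarrow> ('x,'y,'x) strategy" where
  "reactive \<sigma>0 \<sigma>s h = fold (\<lambda>y \<tau>. \<sigma>s \<tau> y) (map snd h) \<sigma>0"

definition mixpay :: "('x \<Rightarrow> 'y \<Rightarrow> real) \<Rightarrow> 'x pmf \<Rightarrow> 'y \<Rightarrow> real" where
  "mixpay \<phi> \<tau> y = measure_pmf.expectation \<tau> (\<lambda>x. \<phi> x y)"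

definition mix :: "real \<Rightarrow> 'x pmf \<Rightarrow> 'x pmf \<Rightarrow> 'x pmf" where
  "mix p \<tau>1 \<tau>2 = bind_pmf (bernoulli_pmf p) (\<lambda>b. if b then \<tau>1 else \<tau>2)"

end

theory Submission
  imports Defs
begin

text \<open>Write \<open>p\<close> for the weight of \<open>\<tau>\<^sup>+\<close> in the current mixed action and
  \<open>s = min \<phi>(\<tau>\<^sup>+,\<cdot>) - max \<phi>(\<tau>\<^sup>-,\<cdot>)\<close>. The reaction is chosen so that the potential
  \<open>V = s (p - p\<^sub>0)\<close>, with \<open>s p\<^sub>0 = K - max \<phi>(\<tau>\<^sup>-,\<cdot>)\<close>, satisfies
  \<open>V(p) - \<lambda> V(p\<^sup>*[p,s\<^sub>Y]) = (1 - \<lambda>) (\<phi>(p \<tau>\<^sup>+ + (1 - p) \<tau>\<^sup>-, s\<^sub>Y) - K)\<close> for every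
  action \<open>s\<^sub>Y\<close>; the two hypotheses are what keep the solution \<open>p\<^sup>*\<close> of this equation
  in \<open>[0,1]\<close>. Taking expectations along the play, the discounted payoff telescopes to
  \<open>V(p\<^sub>0) = 0\<close>, whatever the opponent does.\<close>

lemma integrable_measure_pmf_bounded:
  fixes f :: "'a \<Rightarrow> real"
  assumes "\<And>x. \<bar>f x\<bar> \<le> B"
  shows "integrable (measure_pmf M) f"
  by (rule measure_pmf.integrable_const_bound[where B=B]) (use assms in auto)

lemma abs_integral_measure_pmf_le:
  fixes f :: "'a \<Rightarrow> real"
  assumes "\<And>x. \<bar>f x\<bar> \<le> B"
  shows "\<bar>\<integral>x. f x \<partial>measure_pmf M\<bar> \<le> B"
proof -
  have "\<bar>\<integral>x. f x \<partial>measure_pmf M\<bar> \<le> (\<integral>x. \<bar>f x\<bar> \<partial>measure_pmf M)"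
    by (rule integral_abs_bound)
  also have "\<dots> \<le> B"
    using assms by (intro measure_pmf.integral_le_const integrable_measure_pmf_bounded) auto
  finally show ?thesis .
qed

lemma integral_bind_pmf_bounded:
  fixes f :: "'b \<Rightarrow> real"
  assumes "\<And>x. \<bar>f x\<bar> \<le> B"
  shows "(\<integral>x. f x \<partial>measure_pmf (bind_pmf M N)) = (\<integral>x. (\<integral>y. f y \<partial>measure_pmf (N x)) \<partial>measure_pmf M)"
  unfolding measure_pmf_bind
  by (rule integral_bind[where K="count_space UNIV" and B=B and B'=1])
    (use assms in \<open>auto simp: measure_pmf.emeasure_space_1 prob_space_imp_subprob_space
       measure_pmf_in_subprob_algebra intro!: measure_pmf.finite_measure\<close>)

lemma integral_measure_pmf_swap:
  fixes F :: "'a::finite \<Rightarrow> 'b::finite \<Rightarrow> real"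
  shows "(\<integral>x. (\<integral>y. F x y \<partial>measure_pmf N) \<partial>measure_pmf M) =
         (\<integral>y. (\<integral>x. F x y \<partial>measure_pmf M) \<partial>measure_pmf N)"
proof -
  have "(\<Sum>x\<in>UNIV. pmf M x * (\<Sum>y\<in>UNIV. F x y * pmf N y)) =
        (\<Sum>y\<in>UNIV. pmf N y * (\<Sum>x\<in>UNIV. F x y * pmf M x))"
    unfolding sum_distrib_left by (subst sum.swap) (simp add: mult_ac)
  then show ?thesis
    by (simp add: integral_measure_pmf_real[where A=UNIV] mult.commute)
qed

lemma sums_discounted_telescope:
  fixes G :: "nat \<Rightarrow> real"
  assumes "0 \<le> lam" "lam < 1" and "\<And>t. \<bar>G t\<bar> \<le> B"
  shows "(\<lambda>t. lam ^ t * (G t - lam * G (Suc t))) sums G 0"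
proof -
  have "(\<lambda>t. lam ^ t * G t) \<longlonglongrightarrow> 0"
  proof (rule Lim_null_comparison)
    show "\<forall>\<^sub>F t in sequentially. norm (lam ^ t * G t) \<le> B * lam ^ t"
      using assms by (intro always_eventually allI) (simp add: abs_mult mult.commute[of B] mult_left_mono)
    show "(\<lambda>t. B * lam ^ t) \<longlonglongrightarrow> 0"
      using assms by (intro tendsto_mult_right_zero LIMSEQ_power_zero) auto
  qed
  then have "(\<lambda>t. lam ^ t * G t - lam ^ Suc t * G (Suc t)) sums (lam ^ 0 * G 0 - 0)"
    by (rule telescope_sums')
  then show ?thesis by (simp add: algebra_simps)
qed

definition next_round_exp ::
    "('x,'y,'x) strategy \<Rightarrow> ('x,'y,'y) strategy \<Rightarrow> ('x,'y) history \<Rightarrow> ('x \<Rightarrow> 'y \<Rightarrow> real) \<Rightarrow> real" where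
  "next_round_exp \<sigma>X \<sigma>Y h g = (\<integral>x. (\<integral>y. g x y \<partial>measure_pmf (\<sigma>Y h)) \<partial>measure_pmf (\<sigma>X h))"

lemma abs_next_round_exp_le:
  assumes "\<And>x y. \<bar>g x y\<bar> \<le> B"
  shows "\<bar>next_round_exp \<sigma>X \<sigma>Y h g\<bar> \<le> B"
  unfolding next_round_exp_def by (intro abs_integral_measure_pmf_le assms)

lemma integral_hist_dist_Suc:
  fixes g :: "('x,'y) history \<Rightarrow> real"
  assumes "\<And>h. \<bar>g h\<bar> \<le> B"
  shows "(\<integral>h. g h \<partial>measure_pmf (hist_dist \<sigma>X \<sigma>Y (Suc t))) =
         (\<integral>h. next_round_exp \<sigma>X \<sigma>Y h (\<lambda>x y. g (h @ [(x, y)])) \<partial>measure_pmf (hist_dist \<sigma>X \<sigma>Y t))"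
  by (simp add: next_round_exp_def integral_bind_pmf_bounded[where B=B, OF assms])

lemma round_exp_eq_integral_next_round_exp:
  assumes "\<And>x y. \<bar>f x y\<bar> \<le> C"
  shows "round_exp \<sigma>X \<sigma>Y f t = (\<integral>h. next_round_exp \<sigma>X \<sigma>Y h f \<partial>measure_pmf (hist_dist \<sigma>X \<sigma>Y t))"
  unfolding round_exp_def by (subst integral_hist_dist_Suc[where B=C]) (simp_all add: assms)

lemma disc_payoff_eq_potential:
  fixes V :: "('x,'y) history \<Rightarrow> real"
  assumes lam: "0 \<le> lam" "lam < 1"
    and V_bounded: "\<And>h. \<bar>V h\<bar> \<le> B" and f_bounded: "\<And>x y. \<bar>f x y\<bar> \<le> C"
    and potential: "\<And>h. V h - lam * next_round_exp \<sigma>X \<sigma>Y h (\<lambda>x y. V (h @ [(x, y)])) =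
                          (1 - lam) * next_round_exp \<sigma>X \<sigma>Y h f"
  shows "disc_payoff \<sigma>X \<sigma>Y f lam = V []"
proof -
  define G where "G t = (\<integral>h. V h \<partial>measure_pmf (hist_dist \<sigma>X \<sigma>Y t))" for t
  have G_bounded: "\<bar>G t\<bar> \<le> B" for t
    unfolding G_def by (intro abs_integral_measure_pmf_le V_bounded)
  have step: "G t - lam * G (Suc t) = (1 - lam) * round_exp \<sigma>X \<sigma>Y f t" for t
  proof -
    let ?W = "\<lambda>h. next_round_exp \<sigma>X \<sigma>Y h (\<lambda>x y. V (h @ [(x, y)]))"
    have integrable: "integrable (hist_dist \<sigma>X \<sigma>Y t) V" "integrable (hist_dist \<sigma>X \<sigma>Y t) ?W"
      using V_bounded by (auto intro: integrable_measure_pmf_bounded abs_next_round_exp_le)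
    have "G t - lam * G (Suc t) = (\<integral>h. V h - lam * ?W h \<partial>measure_pmf (hist_dist \<sigma>X \<sigma>Y t))"
      unfolding G_def integral_hist_dist_Suc[where B=B, OF V_bounded]
      using integrable by simp
    also have "\<dots> = (1 - lam) * round_exp \<sigma>X \<sigma>Y f t"
      by (simp add: potential round_exp_eq_integral_next_round_exp[OF f_bounded])
    finally show ?thesis .
  qed
  have "(\<lambda>t. lam ^ t * (G t - lam * G (Suc t))) sums G 0"
    using lam G_bounded by (rule sums_discounted_telescope)
  then have "(\<lambda>t. (1 - lam) * (lam ^ t * round_exp \<sigma>X \<sigma>Y f t)) sums V []"
    by (simp add: step G_def[of 0] mult_ac)
  then show ?thesis
    using lam by (auto simp: disc_payoff_def sums_iff summable_cmult_iff suminf_mult)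
qed

lemma mixpay_mix:
  fixes \<phi> :: "'x::finite \<Rightarrow> 'y \<Rightarrow> real"
  assumes "0 \<le> p" "p \<le> 1"
  shows "mixpay \<phi> (mix p \<tau>1 \<tau>2) y = p * mixpay \<phi> \<tau>1 y + (1 - p) * mixpay \<phi> \<tau>2 y"
proof -
  have bound: "\<bar>\<phi> x y\<bar> \<le> (\<Sum>x'\<in>UNIV. \<bar>\<phi> x' y\<bar>)" for x
    by (rule member_le_sum) auto
  show ?thesis
    unfolding mixpay_def mix_def using assms by (simp add: integral_bind_pmf_bounded[OF bound])
qed

lemma mixpay_diff_const:
  fixes \<phi> :: "'x::finite \<Rightarrow> 'y \<Rightarrow> real"
  shows "mixpay (\<lambda>x y. \<phi> x y - K) \<tau> y = mixpay \<phi> \<tau> y - K"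
  by (simp add: mixpay_def integrable_measure_pmf_finite)

lemma next_round_exp_eq_integral_mixpay:
  fixes \<phi> :: "'x::finite \<Rightarrow> 'y::finite \<Rightarrow> real"
  shows "next_round_exp \<sigma>X \<sigma>Y h \<phi> = (\<integral>y. mixpay \<phi> (\<sigma>X h) y \<partial>measure_pmf (\<sigma>Y h))"
  unfolding next_round_exp_def mixpay_def by (rule integral_measure_pmf_swap)

lemma reactive_mix:
  assumes "p0 \<in> {0..1}" and "\<And>p y. p \<in> {0..1} \<Longrightarrow> ps p y \<in> {0..1}"
    and "\<And>p y. p \<in> {0..1} \<Longrightarrow> \<sigma>s (mix p \<tau>1 \<tau>2) y = mix (ps p y) \<tau>1 \<tau>2"
  shows "fold (\<lambda>y p. ps p y) (map snd h) p0 \<in> {0..1} \<and>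
         reactive (mix p0 \<tau>1 \<tau>2) \<sigma>s h = mix (fold (\<lambda>y p. ps p y) (map snd h) p0) \<tau>1 \<tau>2"
proof (induction h rule: rev_induct)
  case Nil
  then show ?case using assms(1) by (simp add: reactive_def)
next
  case (snoc xy h)
  then show ?case using assms(2,3) by (simp add: reactive_def)
qed

lemma autocratic_reactive_mix_if_potential:
  fixes \<phi> :: "'x::finite \<Rightarrow> 'y::finite \<Rightarrow> real"
  assumes lam: "0 \<le> lam" "lam < 1"
    and p0: "p0 \<in> {0..1}" and ps: "\<And>p y. p \<in> {0..1} \<Longrightarrow> ps p y \<in> {0..1}"
    and \<sigma>s: "\<And>p y. p \<in> {0..1} \<Longrightarrow> \<sigma>s (mix p \<tau>1 \<tau>2) y = mix (ps p y) \<tau>1 \<tau>2"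
    and potential: "\<And>p y. p \<in> {0..1} \<Longrightarrow>
      c * (p - p0) - lam * (c * (ps p y - p0)) = (1 - lam) * (mixpay \<phi> (mix p \<tau>1 \<tau>2) y - K)"
  shows "autocratic (reactive (mix p0 \<tau>1 \<tau>2) \<sigma>s) (\<lambda>x y. \<phi> x y - K) lam"
  unfolding autocratic_def
proof
  fix \<sigma>Y :: "('x,'y,'y) strategy"
  let ?\<sigma>X = "reactive (mix p0 \<tau>1 \<tau>2) \<sigma>s"
  define P where "P h = fold (\<lambda>y p. ps p y) (map snd h) p0" for h :: "('x,'y) history"
  have P: "P h \<in> {0..1}" "?\<sigma>X h = mix (P h) \<tau>1 \<tau>2" for h
    using reactive_mix[of p0 ps \<sigma>s, OF p0 ps \<sigma>s] by (auto simp: P_def)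
  define V where "V h = c * (P h - p0)" for h
  have "disc_payoff ?\<sigma>X \<sigma>Y (\<lambda>x y. \<phi> x y - K) lam = V []"
  proof (rule disc_payoff_eq_potential[OF lam])
    show "\<bar>V h\<bar> \<le> \<bar>c\<bar>" for h
      using P(1)[of h] p0 by (auto simp: V_def abs_mult intro: mult_left_le)
    show "\<bar>\<phi> x y - K\<bar> \<le> Max (range (\<lambda>(x, y). \<bar>\<phi> x y - K\<bar>))" for x y
      by (rule Max_ge) auto
    fix h
    have next_potential: "next_round_exp ?\<sigma>X \<sigma>Y h (\<lambda>x y. V (h @ [(x, y)])) =
        (\<integral>y. c * (ps (P h) y - p0) \<partial>measure_pmf (\<sigma>Y h))"
      by (simp add: next_round_exp_def V_def P_def)
    have next_payoff: "next_round_exp ?\<sigma>X \<sigma>Y h (\<lambda>x y. \<phi> x y - K) =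
        (\<integral>y. mixpay \<phi> (mix (P h) \<tau>1 \<tau>2) y - K \<partial>measure_pmf (\<sigma>Y h))"
      by (simp add: next_round_exp_eq_integral_mixpay mixpay_diff_const P(2))
    have "V h - lam * next_round_exp ?\<sigma>X \<sigma>Y h (\<lambda>x y. V (h @ [(x, y)])) =
        (\<integral>y. c * (P h - p0) - lam * (c * (ps (P h) y - p0)) \<partial>measure_pmf (\<sigma>Y h))"
      unfolding next_potential by (simp add: V_def integrable_measure_pmf_finite)
    also have "\<dots> = (1 - lam) * next_round_exp ?\<sigma>X \<sigma>Y h (\<lambda>x y. \<phi> x y - K)"
      unfolding next_payoff by (simp add: potential[OF P(1)])
    finally show "V h - lam * next_round_exp ?\<sigma>X \<sigma>Y h (\<lambda>x y. V (h @ [(x, y)])) =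
        (1 - lam) * next_round_exp ?\<sigma>X \<sigma>Y h (\<lambda>x y. \<phi> x y - K)" .
  qed
  then show "disc_payoff ?\<sigma>X \<sigma>Y (\<lambda>x y. \<phi> x y - K) lam = 0"
    by (simp add: V_def P_def)
qed

text \<open>The potential equation solved for \<open>p\<^sup>*\<close>. The numerator is affine in \<open>p\<close>; by the two
  hypotheses its values at \<open>p = 1\<close> and \<open>p = 0\<close> lie in \<open>[0, \<lambda> (amin - bmax)]\<close>.\<close>

definition reaction_weight :: "real \<Rightarrow> real \<Rightarrow> real \<Rightarrow> ('y \<Rightarrow> real) \<Rightarrow> ('y \<Rightarrow> real) \<Rightarrow> real \<Rightarrow> 'y \<Rightarrow> real" where
  "reaction_weight lam amin bmax a b p y =
     (p * (amin - lam * bmax - (1 - lam) * a y) + (1 - p) * ((1 - lam) * (bmax - b y)))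
     / (lam * (amin - bmax))"

lemma reaction_weight_potential:
  fixes a b :: "'y \<Rightarrow> real" and K :: real
  assumes lam: "0 < lam" "lam < 1" and gap: "bmax < amin"
    and a: "\<And>y. amin \<le> a y \<and> a y \<le> amax" and b: "\<And>y. bmin \<le> b y \<and> b y \<le> bmax"
    and hp: "(1 - lam) * amax + lam * bmax \<le> amin"
    and hm: "bmax \<le> lam * amin + (1 - lam) * bmin"
  defines "ps \<equiv> reaction_weight lam amin bmax a b" and "p0 \<equiv> (K - bmax) / (amin - bmax)"
  shows "p \<in> {0..1} \<Longrightarrow> ps p y \<in> {0..1}"
    and "(amin - bmax) * (p - p0) - lam * ((amin - bmax) * (ps p y - p0)) =
           (1 - lam) * (p * a y + (1 - p) * b y - K)"
proof -
  define e1 where "e1 = amin - lam * bmax - (1 - lam) * a y"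
  define e0 where "e0 = (1 - lam) * (bmax - b y)"
  have ps_y: "lam * (amin - bmax) * ps p y = p * e1 + (1 - p) * e0"
    using lam gap by (simp add: ps_def reaction_weight_def e1_def e0_def)
  show "ps p y \<in> {0..1}" if p: "p \<in> {0..1}"
  proof -
    have "(1 - lam) * amin \<le> (1 - lam) * a y" "(1 - lam) * a y \<le> (1 - lam) * amax"
      "(1 - lam) * bmin \<le> (1 - lam) * b y" "(1 - lam) * b y \<le> (1 - lam) * bmax"
      using a[of y] b[of y] lam by (simp_all add: mult_left_mono)
    then have "0 \<le> e1" "e1 \<le> lam * (amin - bmax)" "0 \<le> e0" "e0 \<le> lam * (amin - bmax)"
      using hp hm by (simp_all add: e1_def e0_def algebra_simps)
    then have "0 \<le> p * e1 + (1 - p) * e0" "p * e1 + (1 - p) * e0 \<le> lam * (amin - bmax)"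
      using p convex_bound_le[of e1 "lam * (amin - bmax)" e0 p "1 - p"] by auto
    moreover have "0 < lam * (amin - bmax)"
      using lam gap by simp
    ultimately show ?thesis
      by (simp add: ps_def reaction_weight_def e1_def e0_def divide_le_eq_1_pos)
  qed
  have "(amin - bmax) * (p - p0) - lam * ((amin - bmax) * (ps p y - p0)) =
        (amin - bmax) * p - (1 - lam) * ((amin - bmax) * p0) - lam * (amin - bmax) * ps p y"
    by (simp add: algebra_simps)
  also have "\<dots> = (amin - bmax) * p - (1 - lam) * (K - bmax) - (p * e1 + (1 - p) * e0)"
    using gap by (simp add: ps_y p0_def)
  also have "\<dots> = (1 - lam) * (p * a y + (1 - p) * b y - K)"
    by (simp add: e1_def e0_def algebra_simps)
  finally show "(amin - bmax) * (p - p0) - lam * ((amin - bmax) * (ps p y - p0)) =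
        (1 - lam) * (p * a y + (1 - p) * b y - K)" .
qed

lemma potential_reaction_exists:
  fixes a b :: "'y \<Rightarrow> real"
  assumes lam: "0 \<le> lam" "lam < 1"
    and a: "\<And>y. amin \<le> a y \<and> a y \<le> amax" and b: "\<And>y. bmin \<le> b y \<and> b y \<le> bmax"
    and hp: "(1 - lam) * amax + lam * bmax \<le> amin"
    and hm: "bmax \<le> lam * amin + (1 - lam) * bmin"
    and K: "bmax \<le> K" "K \<le> amin"
  obtains p0 ps c where "p0 \<in> {0..1}" and "\<And>p y. p \<in> {0..1} \<Longrightarrow> ps p y \<in> {0..1}"
    and "\<And>p y. c * (p - p0) - lam * (c * (ps p y - p0)) = (1 - lam) * (p * a y + (1 - p) * b y - K)"
proof -
  consider "amin = bmax" | "lam = 0" "bmax < amin" | "0 < lam" "bmax < amin"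
    using K lam by linarith
  then show thesis
  proof cases
    case 1
    then have "(1 - lam) * amax \<le> (1 - lam) * amin" "(1 - lam) * bmax \<le> (1 - lam) * bmin"
      using hp hm by (simp_all add: algebra_simps)
    then have "amax \<le> amin" "bmax \<le> bmin"
      using lam by simp_all
    then have "a y = K" "b y = K" for y
      using a[of y] b[of y] 1 K by auto
    then show thesis by (intro that[of 0 "\<lambda>_ _. 0" 0]) (simp_all add: algebra_simps)
  next
    case 2
    then have "a y = amin" "b y = bmax" for y
      using a[of y] b[of y] hp hm by auto
    with 2 K show thesis
      by (intro that[of "(K - bmax) / (amin - bmax)" "\<lambda>_ _. 0" "amin - bmax"])
        (auto simp: field_simps)
  next
    case 3
    note reaction = reaction_weight_potential[OF 3(1) lam(2) 3(2) a b hp hm]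
    show thesis
    proof (rule that[of _ "reaction_weight lam amin bmax a b" "amin - bmax"])
      show "(K - bmax) / (amin - bmax) \<in> {0..1}"
        using 3 K by (simp add: divide_simps)
    qed (fact reaction)+
  qed
qed

theorem lemma2:
  fixes \<phi> :: "'x::finite \<Rightarrow> 'y::finite \<Rightarrow> real"
    and lam K :: real and \<tau>p \<tau>m :: "'x pmf"
  assumes "0 \<le> lam" and "lam < 1"
    and "Min (range (mixpay \<phi> \<tau>p)) \<ge>
           (1 - lam) * Max (range (mixpay \<phi> \<tau>p)) + lam * Max (range (mixpay \<phi> \<tau>m))"
    and "Max (range (mixpay \<phi> \<tau>m)) \<le>
           lam * Min (range (mixpay \<phi> \<tau>p)) + (1 - lam) * Min (range (mixpay \<phi> \<tau>m))"
    and "Max (range (mixpay \<phi> \<tau>m)) \<le> K" and "K \<le> Min (range (mixpay \<phi> \<tau>p))"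
  shows "\<exists>p0 (ps :: real \<Rightarrow> 'y \<Rightarrow> real).
           p0 \<in> {0..1} \<and> (\<forall>p\<in>{0..1}. \<forall>y. ps p y \<in> {0..1}) \<and>
           (\<forall>\<sigma>s :: 'x pmf \<Rightarrow> 'y \<Rightarrow> 'x pmf.
              (\<forall>p\<in>{0..1}. \<forall>y. \<sigma>s (mix p \<tau>p \<tau>m) y = mix (ps p y) \<tau>p \<tau>m) \<longrightarrow>
              autocratic (reactive (mix p0 \<tau>p \<tau>m) \<sigma>s) (\<lambda>x y. \<phi> x y - K) lam)"
proof -
  have bounds: "\<And>y. Min (range (mixpay \<phi> \<tau>)) \<le> mixpay \<phi> \<tau> y \<and> mixpay \<phi> \<tau> y \<le> Max (range (mixpay \<phi> \<tau>))"
    for \<tau> by (auto intro: Min_le Max_ge)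
  obtain p0 ps c where p0: "p0 \<in> {0..1}" and ps: "\<And>p y. p \<in> {0..1} \<Longrightarrow> ps p y \<in> {0..1}"
    and potential: "\<And>p y. c * (p - p0) - lam * (c * (ps p y - p0)) =
      (1 - lam) * (p * mixpay \<phi> \<tau>p y + (1 - p) * mixpay \<phi> \<tau>m y - K)"
    using potential_reaction_exists[where a="mixpay \<phi> \<tau>p" and b="mixpay \<phi> \<tau>m",
          OF assms(1,2) bounds bounds assms(3-6)] by blast
  show ?thesis
  proof (intro exI conjI ballI allI impI)
    show "p0 \<in> {0..1}" by (fact p0)
    show "ps p y \<in> {0..1}" if "p \<in> {0..1}" for p y
      using ps that by blast
    fix \<sigma>s :: "'x pmf \<Rightarrow> 'y \<Rightarrow> 'x pmf"
    assume \<sigma>s: "\<forall>p\<in>{0..1}. \<forall>y. \<sigma>s (mix p \<tau>p \<tau>m) y = mix (ps p y) \<tau>p \<tau>m"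
    show "autocratic (reactive (mix p0 \<tau>p \<tau>m) \<sigma>s) (\<lambda>x y. \<phi> x y - K) lam"
    proof (rule autocratic_reactive_mix_if_potential[OF assms(1,2) p0 ps])
      show "\<sigma>s (mix p \<tau>p \<tau>m) y = mix (ps p y) \<tau>p \<tau>m" if "p \<in> {0..1}" for p y
        using \<sigma>s that by blast
      show "c * (p - p0) - lam * (c * (ps p y - p0)) = (1 - lam) * (mixpay \<phi> (mix p \<tau>p \<tau>m) y - K)"
        if "p \<in> {0..1}" for p y
        using that by (simp add: potential mixpay_mix)
    qed
  qed
qed

end
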